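(* Consider the asynchronous network Newton method described in the context with $0<\varepsilon\le1$, let $t\ge1$, and set $Q(t-1)=\big(D(t-1)^{-1/2}BD(t-1)^{-1/2}\big)^2$. Then for any $y\in\mathbb{R}^n$ that is $\mathcal{F}_{t-1}$-measurable, $$\mathbb{E}\Big[\big\|\big(I-\varepsilon\Phi(t)+\varepsilon\Phi(t)Q(t-1)\big)y\big\|\;\Big|\;\mathcal{F}_{t-1}\Big]\le\Gamma_2\|y\|,\qquad \Gamma_2=\left(\frac{n-1+(1-\varepsilon+\varepsilon\rho^2)^2}{n}\right)^{1/2}<1 .$$
   Context: Setup. Let $n\ge 1$ be the number of agents and $\alpha>0$ a scalar. $W\in\mathbb{R}^{n\times n}$ is a symmetric nonnegative matrix with $W\mathbb{1}=\mathbb{1}$ (where $\mathbb{1}$ is the all-ones vector), $\mathrm{null}(I-W)=\mathrm{span}\{\mathbb{1}\}$, $0\le W_{ij}<1$ for all $i,j$, and $\delta\le W_{ii}\le\Delta$ for all $i$, for constants $0<\delta\le\Delta<1$. Each $f_i:\mathbb{R}\to\mathbb{R}$ is twice continuously differentiable with $0<m\le f_i''(s)\le M<\infty$ for all $s$ and $|f_i''(a)-f_i''(b)|\le L|a-b|$ for all $a,b$. Define $F(x)=\frac12 x^T(I-W)x+\alpha\sum_{i=1}^n f_i(x_i)$ for $x\in\mathbb{R}^n$, with minimum value $F^*$ and minimizer $x^*$. Let $g(x)=\nabla F(x)$, $G(x)=\mathrm{diag}(f_1''(x_1),\dots,f_n''(x_n))$, $H(x)=\nabla^2F(x)=I-W+\alpha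 G(x)$. Let $W_d$ be the diagonal matrix with $[W_d]_{ii}=W_{ii}$, and set $D(x)=\alpha G(x)+2(I-W_d)$ (diagonal, positive definite) and $B=I-2W_d+W$, so $H(x)=D(x)-B$. Define the approximate Hessian inverse $\hat H(x)^{-1}=D(x)^{-1/2}\big(I+D(x)^{-1/2}BD(x)^{-1/2}\big)D(x)^{-1/2}$. Constants: $\rho=\frac{2(1-\delta)}{2(1-\delta)+\alpha m}$, $\Lambda=\frac{1+\rho}{2(1-\Delta)+\alpha m}$, $\lambda=\frac{1}{2(1-\delta)+\alpha M}$. Algorithm (asynchronous network Newton). Given $x(0)\in\mathbb{R}^n$ and stepsize $\varepsilon>0$, let $\Phi(1),\Phi(2),\dots$ be i.i.d. random diagonal $n\times n$ matrices, each equal to $e_ie_i^T$ (the matrix with a single $1$ in position $(i,i)$ and zeros elsewhere) with probability $1/n$ for each $i=1,\dots,n$ (i.e., one uniformly random agent is active per iteration). The iterates are $x(t)=x(t-1)-\varepsilon\,\Phi(t)\hat H(x(t-1))^{-1}g(x(t-1))$, $t\ge1$. Write $g(t)=g(x(t))$, $D(t)=D(x(t))$, $H(t)=H(x(t))$, $\hat H(t)^{-1}=\hat H(x(t))^{-1}$. $\mathcal{F}_t$ denotes the $\sigma$-field generated by $\Phi(1),\dots,\Phi(t)$ (so $x(t)$ is $\mathcal{F}_t$-measurable). *)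

theory Defs
  imports "HOL-Probability.Probability"
begin

text \<open>Agents are indexed by a finite type 'n, so n = CARD('n).
  Vectors are real^'n, matrices real^'n^'n.\<close>

definition diagW :: "real^'n^'n \<Rightarrow> real^'n^'n" where
  "diagW W = (\<chi> i j. if i = j then W $ i $ i else 0)"

definition Dmat :: "real^'n^'n \<Rightarrow> real \<Rightarrow> ('n \<Rightarrow> real \<Rightarrow> real) \<Rightarrow> real^'n \<Rightarrow> real^'n^'n" where
  "Dmat W \<alpha> f2 x = (\<chi> i j. if i = j then \<alpha> * f2 i (x $ i) + 2 * (1 - W $ i $ i) else 0)"

definition Dmhalf :: "real^'n^'n \<Rightarrow> real \<Rightarrow> ('n \<Rightarrow> real \<Rightarrow> real) \<Rightarrow> real^'n \<Rightarrow> real^'n^'n" where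
  "Dmhalf W \<alpha> f2 x = (\<chi> i j. if i = j then 1 / sqrt (Dmat W \<alpha> f2 x $ i $ i) else 0)"

definition Bmat :: "real^'n^'n \<Rightarrow> real^'n^'n" where
  "Bmat W = mat 1 - 2 *\<^sub>R diagW W + W"

definition Hhat_inv :: "real^'n^'n \<Rightarrow> real \<Rightarrow> ('n \<Rightarrow> real \<Rightarrow> real) \<Rightarrow> real^'n \<Rightarrow> real^'n^'n" where
  "Hhat_inv W \<alpha> f2 x =
     Dmhalf W \<alpha> f2 x ** (mat 1 + Dmhalf W \<alpha> f2 x ** Bmat W ** Dmhalf W \<alpha> f2 x) ** Dmhalf W \<alpha> f2 x"

definition Qmat :: "real^'n^'n \<Rightarrow> real \<Rightarrow> ('n \<Rightarrow> real \<Rightarrow> real) \<Rightarrow> real^'n \<Rightarrow> real^'n^'n" where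
  "Qmat W \<alpha> f2 x =
     (Dmhalf W \<alpha> f2 x ** Bmat W ** Dmhalf W \<alpha> f2 x) ** (Dmhalf W \<alpha> f2 x ** Bmat W ** Dmhalf W \<alpha> f2 x)"

definition gradF :: "real^'n^'n \<Rightarrow> real \<Rightarrow> ('n \<Rightarrow> real \<Rightarrow> real) \<Rightarrow> real^'n \<Rightarrow> real^'n" where
  "gradF W \<alpha> f1 x = (mat 1 - W) *v x + \<alpha> *\<^sub>R (\<chi> i. f1 i (x $ i))"

definition Emat :: "'n \<Rightarrow> real^'n^'n" where
  "Emat k = (\<chi> i j. if i = k \<and> j = k then 1 else 0)"

text \<open>Iterates of the asynchronous network Newton method; the active agent at
  iteration t is I t omega, i.e. Phi(t) = Emat (I t omega).\<close>
primrec xiter :: "real^'n^'n \<Rightarrow> real \<Rightarrow> ('n \<Rightarrow> real \<Rightarrow> real) \<Rightarrow> ('n \<Rightarrow> real \<Rightarrow> real)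
     \<Rightarrow> real \<Rightarrow> real^'n \<Rightarrow> (nat \<Rightarrow> 'a \<Rightarrow> 'n) \<Rightarrow> nat \<Rightarrow> 'a \<Rightarrow> real^'n" where
  "xiter W \<alpha> f1 f2 \<epsilon> x0 I 0 \<omega> = x0"
| "xiter W \<alpha> f1 f2 \<epsilon> x0 I (Suc t) \<omega> =
     xiter W \<alpha> f1 f2 \<epsilon> x0 I t \<omega>
     - \<epsilon> *\<^sub>R (Emat (I (Suc t) \<omega>) *v (Hhat_inv W \<alpha> f2 (xiter W \<alpha> f1 f2 \<epsilon> x0 I t \<omega>)
                  *v gradF W \<alpha> f1 (xiter W \<alpha> f1 f2 \<epsilon> x0 I t \<omega>)))"

text \<open>F_s: sigma-field generated by Phi(1),...,Phi(s) (trivial for s = 0).\<close>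
definition Filt :: "'a measure \<Rightarrow> (nat \<Rightarrow> 'a \<Rightarrow> 'n) \<Rightarrow> nat \<Rightarrow> 'a measure" where
  "Filt M I s = sigma (space M) {I k -` A \<inter> space M | k A. k \<in> {1..s}}"

end

theory Submission
  imports Defs
begin

text \<open>Conditionally on the past, the active agent is uniform and independent of the
  current iterate, so the conditional expectation is the average over the agents i of
  the norm of the vector obtained from y by relaxing its i-th coordinate towards that of
  Q y. The sum of squares of these n norms is (n - 1) |y|^2 + |(1 - eps) y + eps Q y|^2,
  and Cauchy-Schwarz bounds their average by the square root of the n-th part of this.
  Finally |Q| \<le> rho^2, because D^(-1/2) B D^(-1/2) is a symmetric nonnegative matrix
  whose row sums against the positive vector D^(1/2) 1 are at most rho times that vector
  (Schur's test).\<close>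

lemma norm_vec_eq_sqrt_sum: "norm (x::real^'n) = sqrt (\<Sum>i\<in>UNIV. (x$i)^2)"
  by (simp add: norm_vec_def L2_set_def)

lemma power2_norm_vec_eq_sum: "(norm (x::real^'n))^2 = (\<Sum>i\<in>UNIV. (x$i)^2)"
  by (simp add: norm_vec_eq_sqrt_sum sum_nonneg)

lemma norm_matrix_vector_le_Schur_test:
  fixes C :: "real^'n^'n" and u x :: "real^'n"
  assumes nonneg: "\<And>i j. 0 \<le> C$i$j" and sym: "\<And>i j. C$i$j = C$j$i"
    and u_pos: "\<And>i. 0 < u$i" and row: "\<And>i. (\<Sum>j\<in>UNIV. C$i$j * u$j) \<le> r * u$i"
    and r: "0 \<le> r"
  shows "norm (C *v x) \<le> r * norm x"
proof -
  define S where "S i = (\<Sum>j\<in>UNIV. C$i$j * (x$j)^2 / u$j)" for i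
  have S_nonneg: "0 \<le> S i" for i
    unfolding S_def using nonneg u_pos by (intro sum_nonneg divide_nonneg_pos mult_nonneg_nonneg) auto
  have entry: "((C *v x)$i)^2 \<le> r * u$i * S i" for i
  proof -
    have split: "C$i$j * x$j = sqrt (C$i$j * u$j) * (sqrt (C$i$j / u$j) * x$j)" for j
    proof -
      have "sqrt (C$i$j * u$j) * sqrt (C$i$j / u$j) = C$i$j"
        using u_pos[of j] nonneg[of i j] by (simp add: real_sqrt_mult[symmetric] power2_eq_square)
      then show ?thesis by (simp add: mult.assoc[symmetric])
    qed
    have "((C *v x)$i)^2 = (\<Sum>j\<in>UNIV. sqrt (C$i$j * u$j) * (sqrt (C$i$j / u$j) * x$j))^2"
      by (simp add: matrix_vector_mult_def split)
    also have "\<dots> \<le> (\<Sum>j\<in>UNIV. (sqrt (C$i$j * u$j))^2) * (\<Sum>j\<in>UNIV. (sqrt (C$i$j / u$j) * x$j)^2)"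
      by (rule Cauchy_Schwarz_ineq_sum)
    also have "\<dots> = (\<Sum>j\<in>UNIV. C$i$j * u$j) * S i"
      using nonneg u_pos unfolding S_def
      by (intro arg_cong2[where f="(*)"] sum.cong) (auto simp: power_mult_distrib less_imp_le)
    also have "\<dots> \<le> r * u$i * S i" using row[of i] S_nonneg[of i] by (rule mult_right_mono)
    finally show ?thesis .
  qed
  have "(\<Sum>i\<in>UNIV. ((C *v x)$i)^2) \<le> (\<Sum>i\<in>UNIV. r * u$i * S i)"
    by (rule sum_mono) (rule entry)
  also have "\<dots> = r * (\<Sum>j\<in>UNIV. (x$j)^2 / u$j * (\<Sum>i\<in>UNIV. C$j$i * u$i))"
  proof -
    have "(\<Sum>i\<in>UNIV. r * u$i * S i) = (\<Sum>i\<in>UNIV. \<Sum>j\<in>UNIV. r * u$i * (C$i$j * (x$j)^2 / u$j))"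
      unfolding S_def by (simp add: sum_distrib_left)
    also have "\<dots> = (\<Sum>j\<in>UNIV. \<Sum>i\<in>UNIV. r * u$i * (C$i$j * (x$j)^2 / u$j))"
      by (rule sum.swap)
    also have "\<dots> = r * (\<Sum>j\<in>UNIV. (x$j)^2 / u$j * (\<Sum>i\<in>UNIV. C$j$i * u$i))"
      by (simp add: sum_distrib_left sym mult_ac)
    finally show ?thesis .
  qed
  also have "\<dots> \<le> r * (\<Sum>j\<in>UNIV. (x$j)^2 / u$j * (r * u$j))"
    using r u_pos row by (intro mult_left_mono sum_mono) (auto intro!: mult_left_mono simp: less_imp_le)
  also have "\<dots> = r^2 * (\<Sum>j\<in>UNIV. (x$j)^2)"
    using u_pos by (simp add: sum_distrib_left power2_eq_square less_imp_neq[symmetric] mult_ac)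
  finally have "sqrt (\<Sum>i\<in>UNIV. ((C *v x)$i)^2) \<le> sqrt (r^2 * (\<Sum>j\<in>UNIV. (x$j)^2))"
    by (rule real_sqrt_le_mono)
  then show ?thesis using r by (simp add: norm_vec_eq_sqrt_sum real_sqrt_mult)
qed

definition normalized_B :: "real^'n^'n \<Rightarrow> real \<Rightarrow> ('n \<Rightarrow> real \<Rightarrow> real) \<Rightarrow> real^'n \<Rightarrow> real^'n^'n" where
  "normalized_B W \<alpha> f2 x = Dmhalf W \<alpha> f2 x ** Bmat W ** Dmhalf W \<alpha> f2 x"

lemma Qmat_eq_normalized_B_squared:
  "Qmat W \<alpha> f2 x = normalized_B W \<alpha> f2 x ** normalized_B W \<alpha> f2 x"
  by (simp add: Qmat_def normalized_B_def)

lemma Bmat_entry: "Bmat W $ i $ j = (if i = j then 1 - W$i$i else W$i$j)"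
  by (simp add: Bmat_def diagW_def mat_def)

lemma normalized_B_entry:
  fixes W :: "real^'n^'n"
  shows "normalized_B W \<alpha> f2 x $ i $ j
     = Bmat W $ i $ j / (sqrt (Dmat W \<alpha> f2 x $ i $ i) * sqrt (Dmat W \<alpha> f2 x $ j $ j))"
proof -
  have left: "(Dmhalf W \<alpha> f2 x ** Bmat W) $ i $ k = Bmat W $ i $ k / sqrt (Dmat W \<alpha> f2 x $ i $ i)" for k
  proof -
    have "(Dmhalf W \<alpha> f2 x ** Bmat W) $ i $ k
        = (\<Sum>l\<in>UNIV. if l = i then Bmat W $ i $ k / sqrt (Dmat W \<alpha> f2 x $ i $ i) else 0)"
      unfolding matrix_matrix_mult_def Dmhalf_def vec_lambda_beta by (intro sum.cong) auto
    then show ?thesis by simp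
  qed
  have "normalized_B W \<alpha> f2 x $ i $ j
      = (\<Sum>k\<in>UNIV. if k = j then Bmat W $ i $ j / sqrt (Dmat W \<alpha> f2 x $ i $ i) / sqrt (Dmat W \<alpha> f2 x $ j $ j) else 0)"
    unfolding normalized_B_def matrix_matrix_mult_def[of _ "Dmhalf W \<alpha> f2 x"] vec_lambda_beta left
    by (intro sum.cong) (auto simp: Dmhalf_def)
  then show ?thesis by simp
qed

lemma normalized_B_rate_bounds:
  fixes \<delta> \<alpha> m :: real
  assumes "\<delta> < 1" "0 < \<alpha>" "0 < m"
  shows "0 \<le> 2 * (1 - \<delta>) / (2 * (1 - \<delta>) + \<alpha> * m)" "2 * (1 - \<delta>) / (2 * (1 - \<delta>) + \<alpha> * m) < 1"
proof -
  have "0 < 2 * (1 - \<delta>) + \<alpha> * m" using assms by (intro add_pos_pos mult_pos_pos) auto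
  then show "0 \<le> 2 * (1 - \<delta>) / (2 * (1 - \<delta>) + \<alpha> * m)" "2 * (1 - \<delta>) / (2 * (1 - \<delta>) + \<alpha> * m) < 1"
    using assms by (simp_all add: field_simps)
qed

lemma norm_normalized_B_le:
  fixes W :: "real^'n^'n"
  assumes W_sym: "transpose W = W"
    and W_nonneg: "\<And>i j. 0 \<le> W $ i $ j"
    and W_lt1: "\<And>i j. W $ i $ j < 1"
    and W_stoch: "W *v (\<chi> i. 1) = (\<chi> i. 1)"
    and W_diag: "\<And>i. \<delta> \<le> W $ i $ i"
    and \<alpha>_pos: "0 < \<alpha>" and m_pos: "0 < m"
    and f2_ge: "\<And>i s. m \<le> f2 i s"
  shows "norm (normalized_B W \<alpha> f2 x *v v) \<le> 2 * (1 - \<delta>) / (2 * (1 - \<delta>) + \<alpha> * m) * norm v"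
proof (rule norm_matrix_vector_le_Schur_test)
  define \<rho> where "\<rho> = 2 * (1 - \<delta>) / (2 * (1 - \<delta>) + \<alpha> * m)"
  define D where "D i = Dmat W \<alpha> f2 x $ i $ i" for i
  have D_eq: "D i = \<alpha> * f2 i (x $ i) + 2 * (1 - W $ i $ i)" for i
    by (simp add: D_def Dmat_def)
  have D_pos: "0 < D i" for i
    unfolding D_eq using W_lt1[of i i] \<alpha>_pos m_pos f2_ge[of i "x$i"] by (smt (verit) mult_pos_pos)
  have \<delta>_lt1: "\<delta> < 1" using W_diag W_lt1 by (meson order_le_less_trans)
  have denom_pos: "0 < 2 * (1 - \<delta>) + \<alpha> * m"
    using \<delta>_lt1 \<alpha>_pos m_pos by (intro add_pos_pos mult_pos_pos) auto
  let ?C = "normalized_B W \<alpha> f2 x"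
  let ?u = "\<chi> i. sqrt (D i)"
  show "0 \<le> ?C$i$j" for i j
    using W_nonneg[of i j] W_lt1 D_pos
    by (simp add: normalized_B_entry Bmat_entry D_def[symmetric] less_imp_le)
  have "W$i$j = W$j$i" for i j
    using W_sym by (metis transpose_def vec_lambda_beta)
  then show "?C$i$j = ?C$j$i" for i j
    by (simp add: normalized_B_entry Bmat_entry mult.commute)
  show "0 < ?u $ i" for i using D_pos by simp
  show "0 \<le> 2 * (1 - \<delta>) / (2 * (1 - \<delta>) + \<alpha> * m)"
    using normalized_B_rate_bounds(1) \<delta>_lt1 \<alpha>_pos m_pos .
  fix i
  have row_sum_B: "(\<Sum>j\<in>UNIV. Bmat W $i$j) = 2 * (1 - W$i$i)"
  proof -
    have "(W *v (\<chi> i. 1)) $ i = 1" using W_stoch by simp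
    then have "(\<Sum>j\<in>UNIV. W$i$j) = 1" by (simp add: matrix_vector_mult_def)
    moreover have "(\<Sum>j\<in>UNIV. Bmat W $i$j) = (\<Sum>j\<in>UNIV. W$i$j + (if j = i then 1 - 2 * W$i$i else 0))"
      by (intro sum.cong) (auto simp: Bmat_entry)
    ultimately show ?thesis by (simp add: sum.distrib)
  qed
  have "(\<Sum>j\<in>UNIV. ?C$i$j * ?u$j) = (\<Sum>j\<in>UNIV. Bmat W $i$j) / sqrt (D i)"
    unfolding sum_divide_distrib using D_pos
    by (intro sum.cong) (simp_all add: normalized_B_entry D_def[symmetric] less_imp_neq[symmetric])
  also have "\<dots> \<le> \<rho> * D i / sqrt (D i)"
  proof (intro divide_right_mono)
    have "(1 - W$i$i) * (\<alpha> * m) \<le> (1 - \<delta>) * (\<alpha> * f2 i (x$i))"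
      using W_diag[of i] W_lt1[of i i] \<alpha>_pos m_pos f2_ge[of i "x$i"] by (intro mult_mono) auto
    then have "2 * (1 - W$i$i) * (2 * (1 - \<delta>) + \<alpha> * m) \<le> 2 * (1 - \<delta>) * D i"
      unfolding D_eq by (simp add: algebra_simps)
    then show "(\<Sum>j\<in>UNIV. Bmat W $i$j) \<le> \<rho> * D i"
      using denom_pos by (simp add: row_sum_B \<rho>_def field_simps)
  qed (use D_pos[of i] in simp)
  also have "\<dots> = \<rho> * ?u $ i"
    using D_pos[of i] by (simp add: real_div_sqrt less_imp_le flip: times_divide_eq_right)
  finally show "(\<Sum>j\<in>UNIV. ?C$i$j * ?u$j) \<le> 2 * (1 - \<delta>) / (2 * (1 - \<delta>) + \<alpha> * m) * ?u $ i"
    unfolding \<rho>_def .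
qed

lemma norm_Qmat_le:
  assumes normalized_B_le: "\<And>v. norm (normalized_B W \<alpha> f2 x *v v) \<le> \<rho> * norm v" and "0 \<le> \<rho>"
  shows "norm (Qmat W \<alpha> f2 x *v v) \<le> \<rho>\<^sup>2 * norm v"
proof -
  have "norm (Qmat W \<alpha> f2 x *v v) \<le> \<rho> * norm (normalized_B W \<alpha> f2 x *v v)"
    using normalized_B_le by (simp add: Qmat_eq_normalized_B_squared matrix_vector_mul_assoc[symmetric])
  also have "\<dots> \<le> \<rho> * (\<rho> * norm v)"
    using normalized_B_le \<open>0 \<le> \<rho>\<close> by (intro mult_left_mono)
  finally show ?thesis by (simp add: power2_eq_square mult.assoc)
qed

lemma Emat_mult_vector_nth: "(Emat i *v v) $ j = (if j = i then v $ i else 0)"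
proof -
  have "(Emat i *v v) $ j = (\<Sum>k\<in>UNIV. if k = i then (if j = i then v $ i else 0) else 0)"
    unfolding matrix_vector_mult_def Emat_def vec_lambda_beta by (intro sum.cong) auto
  then show ?thesis by simp
qed

definition coordinate_relaxation :: "real \<Rightarrow> real^'n^'n \<Rightarrow> 'n \<Rightarrow> real^'n^'n" where
  "coordinate_relaxation \<epsilon> Q i = mat 1 - \<epsilon> *\<^sub>R Emat i + \<epsilon> *\<^sub>R (Emat i ** Q)"

lemma coordinate_relaxation_nth:
  "(coordinate_relaxation \<epsilon> Q i *v y) $ j
     = (if j = i then (1 - \<epsilon>) * y$i + \<epsilon> * (Q *v y)$i else y$j)"
proof -
  have step: "coordinate_relaxation \<epsilon> Q i *v y
      = y - \<epsilon> *\<^sub>R (Emat i *v y) + \<epsilon> *\<^sub>R (Emat i *v (Q *v y))"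
    unfolding coordinate_relaxation_def
    by (simp only: matrix_vector_mult_add_rdistrib matrix_vector_mult_diff_rdistrib
        scaleR_matrix_vector_assoc[symmetric] matrix_vector_mul_assoc matrix_vector_mul_lid)
  show ?thesis
    unfolding step by (simp add: Emat_mult_vector_nth algebra_simps)
qed

lemma mean_norm_coordinate_relaxation_le:
  fixes Q :: "real^'n^'n" and y :: "real^'n"
  assumes Q_le: "\<And>v. norm (Q *v v) \<le> r * norm v" and "0 \<le> r" and "0 < \<epsilon>" and "\<epsilon> \<le> 1"
  shows "(\<Sum>i\<in>UNIV. norm (coordinate_relaxation \<epsilon> Q i *v y)) / real CARD('n)
     \<le> sqrt ((real CARD('n) - 1 + (1 - \<epsilon> + \<epsilon> * r)\<^sup>2) / real CARD('n)) * norm y"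
proof -
  define a where "a i = norm (coordinate_relaxation \<epsilon> Q i *v y)" for i
  define z where "z = (1 - \<epsilon>) *\<^sub>R y + \<epsilon> *\<^sub>R (Q *v y)"
  define n where "n = real CARD('n)"
  define c where "c = 1 - \<epsilon> + \<epsilon> * r"
  have n_ge1: "1 \<le> n" unfolding n_def by simp
  have a_sq: "(a i)\<^sup>2 = (norm y)\<^sup>2 - (y$i)\<^sup>2 + (z$i)\<^sup>2" for i
  proof -
    have "(a i)\<^sup>2 = (\<Sum>j\<in>UNIV. (y$j)\<^sup>2 + (if j = i then (z$i)\<^sup>2 - (y$i)\<^sup>2 else 0))"
      unfolding a_def power2_norm_vec_eq_sum coordinate_relaxation_nth
      by (intro sum.cong) (auto simp: z_def algebra_simps)
    then show ?thesis by (simp add: sum.distrib power2_norm_vec_eq_sum)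
  qed
  have "norm z \<le> (1 - \<epsilon>) * norm y + \<epsilon> * norm (Q *v y)"
    unfolding z_def using norm_triangle_ineq[of "(1 - \<epsilon>) *\<^sub>R y" "\<epsilon> *\<^sub>R (Q *v y)"] assms by simp
  also have "\<dots> \<le> c * norm y"
    using Q_le[of y] \<open>0 < \<epsilon>\<close> unfolding c_def by (simp add: algebra_simps mult_left_mono)
  finally have "(norm z)\<^sup>2 \<le> (c * norm y)\<^sup>2" by (intro power_mono) auto
  then have sum_sq: "(\<Sum>i\<in>UNIV. (a i)\<^sup>2) \<le> (n - 1 + c\<^sup>2) * (norm y)\<^sup>2"
    unfolding a_sq by (simp add: sum.distrib sum_subtractf power2_norm_vec_eq_sum[symmetric]
        n_def power_mult_distrib algebra_simps)
  have Cauchy_Schwarz: "(\<Sum>i\<in>UNIV. a i)\<^sup>2 \<le> n * (\<Sum>i\<in>UNIV. (a i)\<^sup>2)"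
    using Cauchy_Schwarz_ineq_sum[of "\<lambda>_. 1::real" a UNIV] by (simp add: n_def)
  have "((\<Sum>i\<in>UNIV. a i) / n)\<^sup>2 = (\<Sum>i\<in>UNIV. a i)\<^sup>2 / n\<^sup>2"
    by (simp add: power_divide)
  also have "\<dots> \<le> n * ((n - 1 + c\<^sup>2) * (norm y)\<^sup>2) / n\<^sup>2"
    using Cauchy_Schwarz sum_sq n_ge1 by (intro divide_right_mono) (auto intro: order_trans mult_left_mono)
  also have "\<dots> = (n - 1 + c\<^sup>2) / n * (norm y)\<^sup>2"
    using n_ge1 by (simp add: power2_eq_square field_simps)
  finally have "(\<Sum>i\<in>UNIV. a i) / n \<le> sqrt ((n - 1 + c\<^sup>2) / n * (norm y)\<^sup>2)"
    by (rule real_le_rsqrt)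
  then show ?thesis
    unfolding a_def n_def c_def real_sqrt_mult real_sqrt_abs abs_norm_cancel .
qed

lemma contraction_factor_lt_1:
  assumes "0 < \<epsilon>" "\<epsilon> \<le> 1" "0 \<le> \<rho>" "\<rho> < 1"
  shows "sqrt ((real CARD('n) - 1 + (1 - \<epsilon> + \<epsilon> * \<rho>\<^sup>2)\<^sup>2) / real CARD('n)) < 1"
proof -
  have "\<rho>\<^sup>2 < 1" using power_strict_mono[OF \<open>\<rho> < 1\<close> \<open>0 \<le> \<rho>\<close>, of 2] by simp
  then have c_lt1: "1 - \<epsilon> + \<epsilon> * \<rho>\<^sup>2 < 1"
    using assms by (simp add: algebra_simps mult_strict_left_mono)
  have c_nonneg: "0 \<le> 1 - \<epsilon> + \<epsilon> * \<rho>\<^sup>2" using assms by simp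
  have "(1 - \<epsilon> + \<epsilon> * \<rho>\<^sup>2)\<^sup>2 < 1" using power_strict_mono[OF c_lt1 c_nonneg, of 2] by simp
  then show ?thesis by (simp add: divide_less_eq)
qed

lemma sum_ennreal_mult_ennreal:
  assumes "\<And>i. i \<in> A \<Longrightarrow> 0 \<le> a i" "0 \<le> c"
  shows "(\<Sum>i\<in>A. ennreal (a i) * ennreal c) = ennreal ((\<Sum>i\<in>A. a i) * c)"
  using assms by (simp add: ennreal_mult'[symmetric] sum_ennreal sum_distrib_right sum_nonneg)

lemma borel_measurable_vec_lambda [measurable (raw)]:
  fixes f :: "'a \<Rightarrow> 'n::finite \<Rightarrow> 'b::euclidean_space"
  assumes "\<And>i. (\<lambda>x. f x i) \<in> borel_measurable M"
  shows "(\<lambda>x. \<chi> i. f x i) \<in> borel_measurable M"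
  unfolding borel_measurable_euclidean_space[where f="\<lambda>x. \<chi> i. f x i"]
  using assms by (auto simp: Basis_vec_def inner_axis)

lemma borel_measurable_vec_nth [measurable (raw)]:
  fixes f :: "'a \<Rightarrow> 'b::euclidean_space^'n::finite"
  shows "f \<in> borel_measurable M \<Longrightarrow> (\<lambda>x. f x $ i) \<in> borel_measurable M"
  by (erule measurable_compose) (intro borel_measurable_continuous_onI continuous_intros)

lemma borel_measurable_matrix_matrix_mult [measurable (raw)]:
  fixes X :: "'a \<Rightarrow> real^'k::finite^'m::finite" and Y :: "'a \<Rightarrow> real^'n::finite^'k"
  assumes [measurable]: "X \<in> borel_measurable M" "Y \<in> borel_measurable M"
  shows "(\<lambda>x. X x ** Y x) \<in> borel_measurable M"
  unfolding matrix_matrix_mult_def by measurable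

lemma borel_measurable_matrix_vector_mult [measurable (raw)]:
  fixes X :: "'a \<Rightarrow> real^'k::finite^'m::finite" and y :: "'a \<Rightarrow> real^'k"
  assumes [measurable]: "X \<in> borel_measurable M" "y \<in> borel_measurable M"
  shows "(\<lambda>x. X x *v y x) \<in> borel_measurable M"
  unfolding matrix_vector_mult_def by measurable

lemma borel_measurable_Dmhalf [measurable (raw)]:
  assumes [measurable]: "\<And>i. f2 i \<in> borel_measurable borel" "x \<in> borel_measurable M"
  shows "(\<lambda>\<omega>. Dmhalf W \<alpha> f2 (x \<omega>)) \<in> borel_measurable M"
  unfolding Dmhalf_def Dmat_def by measurable

lemma borel_measurable_Qmat [measurable (raw)]:
  assumes [measurable]: "\<And>i. f2 i \<in> borel_measurable borel" "x \<in> borel_measurable M"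
  shows "(\<lambda>\<omega>. Qmat W \<alpha> f2 (x \<omega>)) \<in> borel_measurable M"
  unfolding Qmat_def by measurable

lemma borel_measurable_Emat [measurable (raw)]:
  assumes [measurable]: "J \<in> measurable M (count_space UNIV)"
  shows "(\<lambda>\<omega>. Emat (J \<omega>)) \<in> borel_measurable M"
  unfolding Emat_def by measurable

lemma sets_Filt: "sets (Filt M I s) = sigma_sets (space M) {I k -` A \<inter> space M | k A. k \<in> {1..s}}"
  unfolding Filt_def by (rule sets_measure_of) auto

lemma space_Filt [simp]: "space (Filt M I s) = space M"
  by (simp add: Filt_def space_measure_of_conv)

lemma subalgebra_Filt_Filt: "s \<le> s' \<Longrightarrow> subalgebra (Filt M I s') (Filt M I s)"
  unfolding subalgebra_def sets_Filt by (simp, rule sigma_sets_subseteq, fastforce)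

lemma subalgebra_Filt:
  assumes "\<And>k. I k \<in> measurable M (count_space UNIV)"
  shows "subalgebra M (Filt M I s)"
  unfolding subalgebra_def sets_Filt
  using assms by (auto intro!: sets.sigma_sets_subset measurable_sets)

lemma measurable_I_Filt: "1 \<le> k \<Longrightarrow> k \<le> s \<Longrightarrow> I k \<in> measurable (Filt M I s) (count_space UNIV)"
  by (rule measurableI) (auto simp: sets_Filt intro!: sigma_sets.Basic)

lemma borel_measurable_xiter_Filt:
  assumes [measurable]: "\<And>i. f1 i \<in> borel_measurable borel" "\<And>i. f2 i \<in> borel_measurable borel"
  shows "xiter W \<alpha> f1 f2 \<epsilon> x0 I s \<in> borel_measurable (Filt M I s)"
proof (induction s)
  case (Suc s)
  have [measurable]: "xiter W \<alpha> f1 f2 \<epsilon> x0 I s \<in> borel_measurable (Filt M I (Suc s))"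
    using measurable_from_subalg[OF subalgebra_Filt_Filt Suc] by simp
  have [measurable]: "I (Suc s) \<in> measurable (Filt M I (Suc s)) (count_space UNIV)"
    by (rule measurable_I_Filt) auto
  show ?case
    unfolding xiter.simps Hhat_inv_def gradF_def by measurable
qed simp

lemma (in sigma_finite_subalgebra) nn_cond_exp_finite_sum:
  assumes "finite S" "\<And>i. i \<in> S \<Longrightarrow> g i \<in> borel_measurable M"
  shows "AE x in M. nn_cond_exp M F (\<lambda>x. \<Sum>i\<in>S. g i x) x = (\<Sum>i\<in>S. nn_cond_exp M F (g i) x)"
  using assms
proof (induction S rule: finite_induct)
  case empty
  have "AE x in M. (\<lambda>_. 0::ennreal) x = nn_cond_exp M F (\<lambda>_. 0) x"
    by (rule nn_cond_exp_F_meas) simp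
  then show ?case by (auto elim!: eventually_mono)
next
  case (insert a S)
  have [measurable]: "g a \<in> borel_measurable M" "\<And>i. i \<in> S \<Longrightarrow> g i \<in> borel_measurable M"
    using insert by auto
  have "AE x in M. nn_cond_exp M F (g a) x + nn_cond_exp M F (\<lambda>x. \<Sum>i\<in>S. g i x) x
      = nn_cond_exp M F (\<lambda>x. g a x + (\<Sum>i\<in>S. g i x)) x"
    by (rule nn_cond_exp_sum) measurable
  with insert show ?case by (auto elim!: eventually_elim2)
qed

lemma vimage_family_eq_UN:
  "{f k -` B \<inter> S | k B. k \<in> K} = (\<Union>k\<in>K. {f k -` B \<inter> S | B. B \<in> sets (count_space UNIV)})"
  by auto

context
  fixes M :: "'a measure" and I :: "nat \<Rightarrow> 'a \<Rightarrow> 'n::finite"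
  assumes prob: "prob_space M"
    and I_meas: "\<And>k. I k \<in> measurable M (count_space UNIV)"
    and I_indep: "prob_space.indep_vars M (\<lambda>_. count_space UNIV) I {1..}"
begin

interpretation prob_space M by (rule prob)

lemma sigma_finite_subalgebra_Filt: "sigma_finite_subalgebra M (Filt M I s)"
  using subalgebra_Filt[OF I_meas] prob
  by (intro finite_measure_subalgebra_is_sigma_finite)
    (simp add: finite_measure_subalgebra_def finite_measure_subalgebra_axioms_def prob_space_def)

lemma prob_Filt_Int_next_agent:
  assumes A: "A \<in> sets (Filt M I s)"
  shows "prob (A \<inter> (I (Suc s) -` {i} \<inter> space M)) = prob A * prob (I (Suc s) -` {i} \<inter> space M)"
proof -
  define E where "E k = {I k -` B \<inter> space M | B. B \<in> sets (count_space (UNIV::'n set))}" for k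
  define K where "K b = (if b then {1..s} else {Suc s})" for b
  define F where "F b = sigma_sets (space M) (\<Union>k\<in>K b. E k)" for b
  have "indep_sets E {1..}" using I_indep unfolding indep_vars_def2 E_def by auto
  then have "indep_sets E (\<Union>b\<in>UNIV. K b)"
    by (rule indep_sets_mono_index[rotated]) (auto simp: K_def)
  then have indep: "indep_sets F UNIV"
    unfolding F_def
  proof (rule indep_sets_collect_sigma)
    show "Int_stable (E k)" for k
    proof (rule Int_stableI)
      fix a b assume "a \<in> E k" "b \<in> E k"
      then obtain B1 B2 where "a = I k -` B1 \<inter> space M" "b = I k -` B2 \<inter> space M"
        unfolding E_def by auto
      then have "a \<inter> b = I k -` (B1 \<inter> B2) \<inter> space M" by auto
      then show "a \<inter> b \<in> E k" unfolding E_def by (intro CollectI exI[of _ "B1 \<inter> B2"]) simp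
    qed
    show "disjoint_family_on K UNIV" by (auto simp: disjoint_family_on_def K_def)
  qed
  have "{I k -` B \<inter> space M | k B. k \<in> {1..s}} = (\<Union>k\<in>K True. E k)"
    unfolding E_def K_def if_True by (rule vimage_family_eq_UN)
  with A have "A \<in> F True" unfolding sets_Filt F_def by simp
  moreover have "I (Suc s) -` {i} \<inter> space M \<in> F False"
    unfolding F_def by (rule sigma_sets.Basic) (auto simp: K_def E_def)
  ultimately show ?thesis
    using indep_setsD[OF indep, of "{True, False}" "\<lambda>b. if b then A else I (Suc s) -` {i} \<inter> space M"]
    by (simp add: Int_commute)
qed

lemma nn_cond_exp_next_agent_indicator:
  assumes unif: "measure M {\<omega> \<in> space M. I (Suc s) \<omega> = i} = 1 / real CARD('n)"
  shows "AE \<omega> in M. nn_cond_exp M (Filt M I s) (indicator (I (Suc s) -` {i} \<inter> space M)) \<omega>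
           = ennreal (1 / real CARD('n))"
proof -
  interpret sigma_finite_subalgebra M "Filt M I s" by (rule sigma_finite_subalgebra_Filt)
  define B where "B = I (Suc s) -` {i} \<inter> space M"
  have [measurable]: "B \<in> sets M" unfolding B_def by (rule measurable_sets[OF I_meas]) simp
  have "prob B = 1 / real CARD('n)"
    using unif by (simp add: B_def Int_def conj_commute)
  have "AE \<omega> in M. ennreal (1 / real CARD('n)) = nn_cond_exp M (Filt M I s) (indicator B) \<omega>"
  proof (rule nn_cond_exp_charact)
    fix A assume A: "A \<in> sets (Filt M I s)"
    then have [measurable]: "A \<in> sets M" using subalg by (auto simp: subalgebra_def)
    have "(\<integral>\<^sup>+\<omega>\<in>A. indicator B \<omega> \<partial>M) = emeasure M (A \<inter> B)"
      by (simp add: Int_commute flip: indicator_inter_arith)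
    also have "\<dots> = ennreal (prob A * prob B)"
      using prob_Filt_Int_next_agent[OF A, of i] by (simp add: emeasure_eq_measure B_def)
    also have "\<dots> = ennreal (1 / real CARD('n)) * emeasure M A"
      using \<open>prob B = 1 / real CARD('n)\<close>
      by (simp add: emeasure_eq_measure ennreal_mult[symmetric] mult.commute)
    also have "\<dots> = (\<integral>\<^sup>+\<omega>\<in>A. ennreal (1 / real CARD('n)) \<partial>M)"
      by (simp add: nn_integral_cmult_indicator)
    finally show "(\<integral>\<^sup>+\<omega>\<in>A. indicator B \<omega> \<partial>M) = (\<integral>\<^sup>+\<omega>\<in>A. ennreal (1 / real CARD('n)) \<partial>M)" .
  qed auto
  then show ?thesis unfolding B_def by (auto elim: eventually_mono)
qed

lemma nn_cond_exp_next_agent: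
  assumes unif: "\<And>i. measure M {\<omega> \<in> space M. I (Suc s) \<omega> = i} = 1 / real CARD('n)"
    and h_meas: "\<And>i. h i \<in> borel_measurable (Filt M I s)"
  shows "AE \<omega> in M. nn_cond_exp M (Filt M I s) (\<lambda>\<omega>. h (I (Suc s) \<omega>) \<omega>) \<omega>
           = (\<Sum>i\<in>UNIV. h i \<omega> * ennreal (1 / real CARD('n)))"
proof -
  interpret sigma_finite_subalgebra M "Filt M I s" by (rule sigma_finite_subalgebra_Filt)
  define B where "B i = I (Suc s) -` {i} \<inter> space M" for i
  have [measurable]: "h i \<in> borel_measurable M" for i
    by (rule measurable_from_subalg[OF subalg h_meas])
  have [measurable]: "B i \<in> sets M" for i unfolding B_def by (rule measurable_sets[OF I_meas]) simp
  have decomp: "h (I (Suc s) \<omega>) \<omega> = (\<Sum>i\<in>UNIV. h i \<omega> * indicator (B i) \<omega>)"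
    if "\<omega> \<in> space M" for \<omega>
    using that by (simp add: B_def indicator_def if_distrib[of "(*) _"] cong: if_cong)
  have sum_meas: "(\<lambda>\<omega>. \<Sum>i\<in>UNIV. h i \<omega> * indicator (B i) \<omega>) \<in> borel_measurable M"
    by measurable
  then have [measurable]: "(\<lambda>\<omega>. h (I (Suc s) \<omega>) \<omega>) \<in> borel_measurable M"
    using measurable_cong[where f="\<lambda>\<omega>. h (I (Suc s) \<omega>) \<omega>", OF decomp] by blast
  have "AE \<omega> in M. nn_cond_exp M (Filt M I s) (\<lambda>\<omega>. h (I (Suc s) \<omega>) \<omega>) \<omega>
      = nn_cond_exp M (Filt M I s) (\<lambda>\<omega>. \<Sum>i\<in>UNIV. h i \<omega> * indicator (B i) \<omega>) \<omega>"
    using sum_meas by (intro nn_cond_exp_cong AE_I2 decomp) auto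
  moreover have "AE \<omega> in M. nn_cond_exp M (Filt M I s) (\<lambda>\<omega>. \<Sum>i\<in>UNIV. h i \<omega> * indicator (B i) \<omega>) \<omega>
      = (\<Sum>i\<in>UNIV. nn_cond_exp M (Filt M I s) (\<lambda>\<omega>. h i \<omega> * indicator (B i) \<omega>) \<omega>)"
    by (rule nn_cond_exp_finite_sum) auto
  moreover have "AE \<omega> in M. \<forall>i\<in>UNIV. nn_cond_exp M (Filt M I s) (\<lambda>\<omega>. h i \<omega> * indicator (B i) \<omega>) \<omega>
      = h i \<omega> * ennreal (1 / real CARD('n))"
  proof (rule AE_finite_allI)
    fix i
    show "AE \<omega> in M. nn_cond_exp M (Filt M I s) (\<lambda>\<omega>. h i \<omega> * indicator (B i) \<omega>) \<omega>
        = h i \<omega> * ennreal (1 / real CARD('n))"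
      using nn_cond_exp_prod[OF h_meas, of "indicator (B i)" i]
        nn_cond_exp_next_agent_indicator[OF unif, of i]
      unfolding B_def[symmetric] by (auto elim: eventually_elim2)
  qed simp
  ultimately show ?thesis by eventually_elim simp
qed

end

theorem mainTheorem5:
  fixes M :: "'a measure"
    and I :: "nat \<Rightarrow> 'a \<Rightarrow> 'n::finite"
    and W :: "real^'n^'n"
    and \<alpha> \<delta> \<Delta> m Mb L \<epsilon> :: real
    and f f1 f2 :: "'n \<Rightarrow> real \<Rightarrow> real"
    and x0 :: "real^'n"
    and t :: nat
    and y :: "'a \<Rightarrow> real^'n"
  assumes prob: "prob_space M"
    and I_meas: "\<And>k. I k \<in> measurable M (count_space UNIV)"
    and I_indep: "prob_space.indep_vars M (\<lambda>_. count_space UNIV) I {1..}"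
    and I_unif: "\<And>k j. k \<ge> 1 \<Longrightarrow> measure M {\<omega> \<in> space M. I k \<omega> = j} = 1 / real CARD('n)"
    and W_sym: "transpose W = W"
    and W_nonneg: "\<And>i j. 0 \<le> W $ i $ j"
    and W_lt1: "\<And>i j. W $ i $ j < 1"
    and W_stoch: "W *v (\<chi> i. 1) = (\<chi> i. 1)"
    and W_null: "{v. (mat 1 - W) *v v = 0} = span {(\<chi> i. 1)}"
    and \<delta>_pos: "0 < \<delta>" and \<delta>\<Delta>: "\<delta> \<le> \<Delta>" and \<Delta>_lt1: "\<Delta> < 1"
    and W_diag: "\<And>i. \<delta> \<le> W $ i $ i \<and> W $ i $ i \<le> \<Delta>"
    and \<alpha>_pos: "0 < \<alpha>"
    and f_d1: "\<And>i s. (f i has_real_derivative f1 i s) (at s)"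
    and f_d2: "\<And>i s. (f1 i has_real_derivative f2 i s) (at s)"
    and f2_cont: "\<And>i. continuous_on UNIV (f2 i)"
    and m_pos: "0 < m" and Mb_fin: "m \<le> Mb"
    and f2_bounds: "\<And>i s. m \<le> f2 i s \<and> f2 i s \<le> Mb"
    and f2_lip: "\<And>i a b. \<bar>f2 i a - f2 i b\<bar> \<le> L * \<bar>a - b\<bar>"
    and \<epsilon>_pos: "0 < \<epsilon>" and \<epsilon>_le1: "\<epsilon> \<le> 1"
    and t_ge1: "t \<ge> 1"
    and y_meas: "y \<in> borel_measurable (Filt M I (t - 1))"
  shows "(let \<rho> = 2 * (1 - \<delta>) / (2 * (1 - \<delta>) + \<alpha> * m);
              \<Gamma>2 = sqrt ((real CARD('n) - 1 + (1 - \<epsilon> + \<epsilon> * \<rho>\<^sup>2)\<^sup>2) / real CARD('n))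
          in (AE \<omega> in M.
                nn_cond_exp M (Filt M I (t - 1))
                  (\<lambda>\<omega>. ennreal (norm ((mat 1 - \<epsilon> *\<^sub>R Emat (I t \<omega>)
                      + \<epsilon> *\<^sub>R (Emat (I t \<omega>) ** Qmat W \<alpha> f2 (xiter W \<alpha> f1 f2 \<epsilon> x0 I (t - 1) \<omega>)))
                      *v y \<omega>))) \<omega>
                \<le> ennreal (\<Gamma>2 * norm (y \<omega>)))
             \<and> \<Gamma>2 < 1)"
proof -
  obtain s where t: "t = Suc s" using t_ge1 by (cases t) auto
  define \<rho> where "\<rho> = 2 * (1 - \<delta>) / (2 * (1 - \<delta>) + \<alpha> * m)"
  define \<Gamma>2 where "\<Gamma>2 = sqrt ((real CARD('n) - 1 + (1 - \<epsilon> + \<epsilon> * \<rho>\<^sup>2)\<^sup>2) / real CARD('n))"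
  have \<rho>_bounds: "0 \<le> \<rho>" "\<rho> < 1"
    unfolding \<rho>_def using normalized_B_rate_bounds[of \<delta> \<alpha> m] \<delta>\<Delta> \<Delta>_lt1 \<alpha>_pos m_pos by auto
  have Q_le: "norm (Qmat W \<alpha> f2 x *v v) \<le> \<rho>\<^sup>2 * norm v" for x v
    using norm_normalized_B_le[OF W_sym W_nonneg W_lt1 W_stoch _ \<alpha>_pos m_pos] W_diag f2_bounds
    by (intro norm_Qmat_le \<rho>_bounds) (auto simp: \<rho>_def)
  have [measurable]: "f1 i \<in> borel_measurable borel" "f2 i \<in> borel_measurable borel" for i
    using DERIV_isCont[OF f_d2] f2_cont[of i]
    by (auto intro: borel_measurable_continuous_onI continuous_at_imp_continuous_on)
  have [measurable]: "y \<in> borel_measurable (Filt M I s)" "xiter W \<alpha> f1 f2 \<epsilon> x0 I s \<in> borel_measurable (Filt M I s)"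
    using y_meas t by (auto intro: borel_measurable_xiter_Filt)
  define h where "h i \<omega> = ennreal (norm (coordinate_relaxation \<epsilon> (Qmat W \<alpha> f2 (xiter W \<alpha> f1 f2 \<epsilon> x0 I s \<omega>)) i *v y \<omega>))"
    for i \<omega>
  have "AE \<omega> in M. nn_cond_exp M (Filt M I s) (\<lambda>\<omega>. h (I (Suc s) \<omega>) \<omega>) \<omega>
          = (\<Sum>i\<in>UNIV. h i \<omega> * ennreal (1 / real CARD('n)))"
    using t I_unif by (intro nn_cond_exp_next_agent[OF prob I_meas I_indep]) (auto simp: h_def coordinate_relaxation_def)
  moreover have "(\<Sum>i\<in>UNIV. h i \<omega> * ennreal (1 / real CARD('n))) \<le> ennreal (\<Gamma>2 * norm (y \<omega>))" for \<omega>
    using mean_norm_coordinate_relaxation_le[OF Q_le _ \<epsilon>_pos \<epsilon>_le1] \<rho>_bounds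
    by (simp add: h_def \<Gamma>2_def sum_ennreal_mult_ennreal ennreal_le_iff)
  ultimately have "AE \<omega> in M. nn_cond_exp M (Filt M I s) (\<lambda>\<omega>. h (I (Suc s) \<omega>) \<omega>) \<omega>
                     \<le> ennreal (\<Gamma>2 * norm (y \<omega>))"
    by (auto elim: eventually_mono)
  moreover have "\<Gamma>2 < 1"
    unfolding \<Gamma>2_def using \<epsilon>_pos \<epsilon>_le1 \<rho>_bounds by (rule contraction_factor_lt_1)
  ultimately show ?thesis by (simp add: t h_def \<rho>_def \<Gamma>2_def coordinate_relaxation_def Let_def)
qed

end
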